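(* Let $\{\phi_i\}_{i=1}^n$ be a geometrically uniform frame for $\mathbb{C}^m$ with frame operator $S=\sum_i\phi_i\phi_i^*$, and let $\mu_i=S^{-1/2}\phi_i$ be its canonical tight frame vectors. Then for every collection $\mu'_1,\dots,\mu'_n\in\mathbb{C}^m$ forming a normalized tight frame (i.e. $\sum_{i=1}^n\mu'_i\mu_i'^*=I_m$), $$\sum_{i=1}^n|\langle\phi_i,\mu'_i\rangle|^2\le\sum_{i=1}^n|\langle\phi_i,\mu_i\rangle|^2 .$$
   Context: Inner product $\langle x,y\rangle=x^*y$. A geometrically uniform (GU) frame is a set $\{\phi_i=U_i\phi\}_{i=1}^n$ spanning $\mathbb{C}^m$, where $\{U_1,\dots,U_n\}$ is an abelian group of $n$ distinct unitary $m\times m$ matrices. $S^{-1/2}$ is the positive definite square root of $S^{-1}$. A normalized tight frame is a set of vectors whose frame operator equals the identity. *)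

theory Defs
  imports "HOL-Analysis.Analysis"
begin

definition cinner :: "complex^'m \<Rightarrow> complex^'m \<Rightarrow> complex" where
  "cinner x y = (\<Sum>k\<in>UNIV. cnj (x $ k) * y $ k)"

definition cadj :: "complex^'m^'m \<Rightarrow> complex^'m^'m" where
  "cadj A = (\<chi> i j. cnj (A $ j $ i))"

definition outer :: "complex^'m \<Rightarrow> complex^'m \<Rightarrow> complex^'m^'m" where
  "outer x y = (\<chi> i j. x $ i * cnj (y $ j))"

definition unitary_mat :: "complex^'m^'m \<Rightarrow> bool" where
  "unitary_mat U \<longleftrightarrow> cadj U ** U = mat 1 \<and> U ** cadj U = mat 1"

definition pos_def_mat :: "complex^'m^'m \<Rightarrow> bool" where
  "pos_def_mat R \<longleftrightarrow> cadj R = R \<and> (\<forall>x. x \<noteq> 0 \<longrightarrow> 0 < Re (cinner x (R *v x)))"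

definition abelian_unitary_group :: "nat \<Rightarrow> (nat \<Rightarrow> complex^'m^'m) \<Rightarrow> bool" where
  "abelian_unitary_group n U \<longleftrightarrow>
     inj_on U {..<n} \<and>
     (\<forall>i<n. unitary_mat (U i)) \<and>
     mat 1 \<in> U ` {..<n} \<and>
     (\<forall>i<n. \<forall>j<n. U i ** U j \<in> U ` {..<n}) \<and>
     (\<forall>i<n. matrix_inv (U i) \<in> U ` {..<n}) \<and>
     (\<forall>i<n. \<forall>j<n. U i ** U j = U j ** U i)"

definition is_frame :: "nat \<Rightarrow> (nat \<Rightarrow> complex^'m) \<Rightarrow> bool" where
  "is_frame n phi \<longleftrightarrow> vec.span (phi ` {..<n}) = UNIV"

definition GU_frame :: "nat \<Rightarrow> (nat \<Rightarrow> complex^'m^'m) \<Rightarrow> complex^'m \<Rightarrow> (nat \<Rightarrow> complex^'m) \<Rightarrow> bool" where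
  "GU_frame n U \<phi> phi \<longleftrightarrow> abelian_unitary_group n U \<and> (\<forall>i<n. phi i = U i *v \<phi>) \<and> is_frame n phi"

definition frame_op :: "nat \<Rightarrow> (nat \<Rightarrow> complex^'m) \<Rightarrow> complex^'m^'m" where
  "frame_op n phi = (\<Sum>i<n. outer (phi i) (phi i))"

end

theory Submission
  imports Defs
begin

text \<open>Every U j permutes the frame vectors, so it commutes with the frame operator S, hence with
  S^-1, and by uniqueness of positive definite square roots with R = S^-1/2. Therefore all the
  numbers <phi i, R phi i> equal a single real r. The Cauchy-Schwarz inequality for the inner
  product defined by R^-1 = R S gives |<phi i, mu' i>|^2 <= r <mu' i, R S mu' i>, and summing
  with the tight frame identity bounds the left-hand side by
  r tr (R S) = r (\<Sum>i. <phi i, R phi i>) = n r^2.\<close>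

lemma cinner_add_left: "cinner (x + y) z = cinner x z + cinner y z"
  unfolding cinner_def by (simp add: distrib_right sum.distrib)

lemma cinner_diff_left: "cinner (x - y) z = cinner x z - cinner y z"
  unfolding cinner_def by (simp add: left_diff_distrib sum_subtractf)

lemma cinner_diff_right: "cinner x (y - z) = cinner x y - cinner x z"
  unfolding cinner_def by (simp add: right_diff_distrib sum_subtractf)

lemma cinner_scale_left: "cinner (c *s x) y = cnj c * cinner x y"
  unfolding cinner_def by (simp add: sum_distrib_left mult_ac)

lemma cinner_scale_right: "cinner x (c *s y) = c * cinner x y"
  unfolding cinner_def by (simp add: sum_distrib_left mult_ac)

lemma cinner_sum_right: "cinner x (\<Sum>i\<in>I. f i) = (\<Sum>i\<in>I. cinner x (f i))"
  unfolding cinner_def by (simp add: sum_distrib_left sum.swap[where A=UNIV])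

lemma cinner_zero_left [simp]: "cinner 0 y = 0"
  unfolding cinner_def by simp

lemma cinner_commute: "cinner y x = cnj (cinner x y)"
  unfolding cinner_def by (simp add: mult.commute)

lemma cinner_self_eq_0: "cinner x x = 0 \<longleftrightarrow> x = 0"
proof
  have "cnj (x $ k) * x $ k = of_real ((cmod (x $ k))\<^sup>2)" for k
    by (metis complex_norm_square mult.commute of_real_power)
  then have "cinner x x = of_real (\<Sum>k\<in>UNIV. (cmod (x $ k))\<^sup>2)"
    unfolding cinner_def by (simp add: of_real_sum)
  moreover assume "cinner x x = 0"
  ultimately have "(\<Sum>k\<in>UNIV. (cmod (x $ k))\<^sup>2) = 0" by (metis of_real_eq_0_iff)
  then show "x = 0" by (simp add: sum_nonneg_eq_0_iff vec_eq_iff)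
qed simp

lemma cadj_cadj [simp]: "cadj (cadj A) = A"
  unfolding cadj_def by (simp add: vec_eq_iff)

lemma cadj_diff: "cadj (A - B) = cadj A - cadj B"
  unfolding cadj_def by (simp add: vec_eq_iff)

lemma cadj_matrix_mult: "cadj (A ** B) = cadj B ** cadj A"
  unfolding cadj_def matrix_matrix_mult_def by (simp add: vec_eq_iff mult.commute)

lemma cinner_matrix_vector_right: "cinner x (A *v y) = cinner (cadj A *v x) y"
  unfolding cinner_def cadj_def matrix_vector_mult_def
  by (simp add: sum_distrib_left sum_distrib_right mult_ac) (rule sum.swap)

lemma cinner_matrix_vector_left: "cinner (A *v x) y = cinner x (cadj A *v y)"
  using cinner_matrix_vector_right[of x "cadj A" y] by simp

lemma cinner_hermitian_real:
  assumes "cadj A = A"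
  shows "cinner x (A *v x) = of_real (Re (cinner x (A *v x)))"
proof -
  have "cnj (cinner x (A *v x)) = cinner x (A *v x)"
    using cinner_matrix_vector_left[of A x x] assms by (simp add: cinner_commute[of "A *v x"])
  then show ?thesis by (metis Reals_cnj_iff complex_is_Real_iff of_real_Re)
qed

lemma matrix_diff_ldistrib: "(A::complex^'m^'m) ** (B - C) = A ** B - A ** C"
  unfolding matrix_matrix_mult_def by (simp add: vec_eq_iff right_diff_distrib sum_subtractf)

lemma matrix_diff_rdistrib: "((A::complex^'m^'m) - B) ** C = A ** C - B ** C"
  unfolding matrix_matrix_mult_def by (simp add: vec_eq_iff left_diff_distrib sum_subtractf)

lemma matrix_sum_ldistrib: "(A::complex^'m^'m) ** (\<Sum>i\<in>I. M i) = (\<Sum>i\<in>I. A ** M i)"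
  unfolding matrix_matrix_mult_def
  by (simp add: vec_eq_iff sum_distrib_left sum.swap[where A=UNIV])

lemma matrix_sum_rdistrib: "(\<Sum>i\<in>I. M i) ** (A::complex^'m^'m) = (\<Sum>i\<in>I. M i ** A)"
  unfolding matrix_matrix_mult_def
  by (simp add: vec_eq_iff sum_distrib_right sum.swap[where A=UNIV])

lemma sum_matrix_vector: "(\<Sum>i\<in>I. M i) *v (x::complex^'m) = (\<Sum>i\<in>I. M i *v x)"
  unfolding matrix_vector_mult_def
  by (simp add: vec_eq_iff sum_distrib_right sum.swap[where A=UNIV])

lemma matrix_vector_scale: "(A::complex^'m^'m) *v (c *s x) = c *s (A *v x)"
  unfolding matrix_vector_mult_def by (simp add: vec_eq_iff sum_distrib_left mult_ac)

lemma outer_matrix_vector: "outer y z *v x = cinner z x *s y"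
  unfolding outer_def matrix_vector_mult_def cinner_def
  by (simp add: vec_eq_iff sum_distrib_left mult_ac)

lemma matrix_outer_cadj: "A ** outer x y ** cadj B = outer (A *v x) (B *v y)"
  unfolding outer_def matrix_matrix_mult_def cadj_def matrix_vector_mult_def
  by (simp add: vec_eq_iff sum_distrib_left sum_distrib_right mult_ac)

lemma trace_mult_outer_sum:
  "trace (M ** (\<Sum>i\<in>I. outer (v i) (v i))) = (\<Sum>i\<in>I. cinner (v i) (M *v v i))"
  unfolding trace_def cinner_def matrix_vector_mult_def matrix_matrix_mult_def outer_def
  by (simp add: sum_distrib_left sum_distrib_right mult_ac sum.swap[where A=I])

lemma trace_hermitian_sandwich:
  assumes "cadj D = D"
  shows "trace (D ** (M ** D)) = (\<Sum>k\<in>UNIV. cinner (column k D) (M *v column k D))"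
proof -
  have "cnj (D $ i $ k) = D $ k $ i" for i k
    using assms unfolding cadj_def by (metis vec_lambda_beta)
  then show ?thesis
    unfolding trace_def cinner_def column_def matrix_vector_mult_def matrix_matrix_mult_def
    by (simp add: sum_distrib_left mult_ac)
qed

lemma invertible_matrix_inv:
  assumes "invertible (A::complex^'m^'m)"
  shows "A ** matrix_inv A = mat 1" and "matrix_inv A ** A = mat 1"
proof -
  have "\<exists>A'. A ** A' = mat 1 \<and> A' ** A = mat 1" using assms unfolding invertible_def .
  then have "A ** matrix_inv A = mat 1 \<and> matrix_inv A ** A = mat 1"
    unfolding matrix_inv_def by (rule someI_ex)
  then show "A ** matrix_inv A = mat 1" and "matrix_inv A ** A = mat 1" by auto
qed

lemma matrix_inv_commute:
  assumes "invertible S" and "U ** S = S ** (U::complex^'m^'m)"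
  shows "U ** matrix_inv S = matrix_inv S ** U"
proof -
  note inv = invertible_matrix_inv[OF assms(1)]
  have "matrix_inv S ** U = matrix_inv S ** U ** (S ** matrix_inv S)" using inv by simp
  also have "\<dots> = matrix_inv S ** (S ** U) ** matrix_inv S"
    by (metis assms(2) matrix_mul_assoc)
  also have "\<dots> = U ** matrix_inv S" using inv by (simp add: matrix_mul_assoc)
  finally show ?thesis by simp
qed

lemma pos_def_mat_cinner_pos: "pos_def_mat A \<Longrightarrow> x \<noteq> 0 \<Longrightarrow> 0 < Re (cinner x (A *v x))"
  unfolding pos_def_mat_def by blast

lemma pos_def_mat_cinner_nonneg: "pos_def_mat A \<Longrightarrow> 0 \<le> Re (cinner x (A *v x))"
  by (cases "x = 0") (auto dest: pos_def_mat_cinner_pos)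

text \<open>With D = A - B we get A D + D B = A^2 - B^2 = 0, so tr (D A D) + tr (D B D) = 0; as D is
  Hermitian, these traces are sums of the quadratic forms of A and B at the columns of D.\<close>

lemma pos_def_mat_sqrt_unique:
  assumes A: "pos_def_mat A" and B: "pos_def_mat B" and AB: "A ** A = B ** B"
  shows "A = B"
proof -
  define D where "D = A - B"
  define q where "q k = Re (cinner (column k D) (A *v column k D))
    + Re (cinner (column k D) (B *v column k D))" for k
  have D_hermitian: "cadj D = D"
    using A B unfolding D_def pos_def_mat_def by (simp add: cadj_diff)
  have "A ** D + D ** B = 0"
    unfolding D_def matrix_diff_ldistrib matrix_diff_rdistrib using AB by simp
  then have "trace (D ** (A ** D)) + trace (D ** (D ** B)) = 0"
    by (metis matrix_add_ldistrib times0_right trace_0 mat_0 trace_add)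
  moreover have "trace (D ** (D ** B)) = trace (D ** (B ** D))"
    by (metis trace_mul_sym matrix_mul_assoc)
  ultimately have "sum q UNIV = 0"
    unfolding q_def trace_hermitian_sandwich[OF D_hermitian] sum.distrib
    by (metis Re_sum plus_complex.sel(1) zero_complex.sel(1))
  moreover have "0 \<le> q k" for k
    unfolding q_def using pos_def_mat_cinner_nonneg[OF A] pos_def_mat_cinner_nonneg[OF B] by simp
  ultimately have "q k = 0" for k
    by (simp add: sum_nonneg_eq_0_iff)
  then have "column k D = 0" for k
    using pos_def_mat_cinner_pos[OF A] pos_def_mat_cinner_nonneg[OF B] unfolding q_def
    by (metis add_pos_nonneg less_irrefl)
  then have "D = 0"
    by (metis column_def vec_eq_iff vec_lambda_beta zero_index)
  then show ?thesis unfolding D_def by simp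
qed

lemma pos_def_mat_unitary_conj:
  assumes U: "unitary_mat U" and A: "pos_def_mat A"
  shows "pos_def_mat (cadj U ** A ** U)"
  unfolding pos_def_mat_def
proof (intro conjI allI impI)
  show "cadj (cadj U ** A ** U) = cadj U ** A ** U"
    using A unfolding pos_def_mat_def by (simp add: cadj_matrix_mult matrix_mul_assoc)
next
  fix x :: "complex^'a" assume "x \<noteq> 0"
  then have "U *v x \<noteq> 0"
    using U unfolding unitary_mat_def by (metis matrix_vector_mul_assoc matrix_vector_mul_lid
        matrix_vector_mult_0_right)
  then have "0 < Re (cinner (U *v x) (A *v (U *v x)))"
    by (rule pos_def_mat_cinner_pos[OF A])
  then show "0 < Re (cinner x ((cadj U ** A ** U) *v x))"
    by (simp add: cinner_matrix_vector_left flip: matrix_vector_mul_assoc)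
qed

lemma pos_def_mat_unitary_invariant:
  assumes R: "pos_def_mat R" and U: "unitary_mat U" and comm: "U ** (R ** R) = (R ** R) ** U"
  shows "cadj U ** R ** U = R"
proof (rule pos_def_mat_sqrt_unique[OF pos_def_mat_unitary_conj[OF U R] R])
  have UU: "U ** cadj U = mat 1" "cadj U ** U = mat 1"
    using U unfolding unitary_mat_def by auto
  have "cadj U ** R ** U ** (cadj U ** R ** U) = cadj U ** R ** (U ** cadj U) ** R ** U"
    by (simp add: matrix_mul_assoc)
  also have "\<dots> = cadj U ** ((R ** R) ** U)"
    by (simp add: UU matrix_mul_assoc)
  also have "\<dots> = cadj U ** U ** (R ** R)"
    by (metis comm matrix_mul_assoc)
  also have "\<dots> = R ** R"
    by (simp add: UU)
  finally show "cadj U ** R ** U ** (cadj U ** R ** U) = R ** R" .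
qed

lemma pos_def_mat_inverse_cinner_nonneg:
  assumes R: "pos_def_mat R" and RT: "R ** T = mat 1"
  shows "0 \<le> Re (cinner x (T *v x))"
proof -
  have "x = R *v (T *v x)" by (simp add: matrix_vector_mul_assoc RT)
  then have "cinner x (T *v x) = cinner (T *v x) (R *v (T *v x))"
    using R unfolding pos_def_mat_def by (metis cinner_matrix_vector_left)
  then show ?thesis using pos_def_mat_cinner_nonneg[OF R] by simp
qed

lemma pos_def_mat_cauchy_schwarz:
  assumes R: "pos_def_mat R" and RT: "R ** T = mat 1"
  shows "(cmod (cinner p m))\<^sup>2 \<le> Re (cinner p (R *v p)) * Re (cinner m (T *v m))"
proof (cases "p = 0")
  case False
  define r where "r = Re (cinner p (R *v p))"
  define a where "a = cinner p m"
  define d where "d = cinner m (T *v m)"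
  define s where "s = a / of_real r"
  define v where "v = s *s (R *v p) - m"
  \<comment> \<open>the minimiser of <v, T v> over v = t R p - m; its nonnegativity is the inequality\<close>
  have R_hermitian: "cadj R = R" using R unfolding pos_def_mat_def by simp
  have r_pos: "0 < r" unfolding r_def using pos_def_mat_cinner_pos[OF R False] .
  have TR: "T ** R = mat 1" using RT matrix_left_right_inverse by blast
  have Rp_p: "cinner (R *v p) p = of_real r"
    unfolding r_def cinner_matrix_vector_left R_hermitian by (rule cinner_hermitian_real[OF R_hermitian])
  have Rp_Tm: "cinner (R *v p) (T *v m) = a"
    unfolding a_def cinner_matrix_vector_left R_hermitian by (simp add: matrix_vector_mul_assoc RT)
  have m_p: "cinner m p = cnj a" unfolding a_def by (rule cinner_commute)
  have Tv: "T *v v = s *s p - T *v m"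
    unfolding v_def by (simp add: matrix_vector_mult_diff_distrib matrix_vector_scale
        matrix_vector_mul_assoc TR)
  have "cinner v (T *v v) = cnj s * (s * of_real r - a) - (s * cnj a - d)"
    unfolding Tv unfolding v_def cinner_diff_left cinner_diff_right cinner_scale_left cinner_scale_right
    by (simp add: Rp_p Rp_Tm m_p d_def algebra_simps)
  also have "\<dots> = d - a * cnj a / of_real r"
    using r_pos by (simp add: s_def field_simps)
  also have "\<dots> = d - of_real ((cmod a)\<^sup>2 / r)"
    by (simp add: complex_norm_square[symmetric])
  finally have "(cmod a)\<^sup>2 / r \<le> Re d"
    using pos_def_mat_inverse_cinner_nonneg[OF R RT, of v] by simp
  then show ?thesis unfolding a_def d_def r_def[symmetric] using r_pos
    by (simp add: divide_le_eq mult.commute)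
qed simp

lemma frame_op_quadratic_form:
  "Re (cinner x (frame_op n phi *v x)) = (\<Sum>i<n. (cmod (cinner (phi i) x))\<^sup>2)"
proof -
  have "cinner x (frame_op n phi *v x) = (\<Sum>i<n. cinner (phi i) x * cinner x (phi i))"
    unfolding frame_op_def sum_matrix_vector outer_matrix_vector cinner_sum_right cinner_scale_right ..
  also have "\<dots> = (\<Sum>i<n. of_real ((cmod (cinner (phi i) x))\<^sup>2))"
    by (rule sum.cong, rule refl) (metis cinner_commute complex_norm_square)
  finally show ?thesis by (simp add: Re_sum)
qed

lemma is_frame_invertible_frame_op:
  assumes "is_frame n phi"
  shows "invertible (frame_op n phi)"
  unfolding invertible_left_inverse matrix_left_invertible_ker
proof (intro allI impI)
  fix x assume "frame_op n phi *v x = 0"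
  then have "(\<Sum>i<n. (cmod (cinner (phi i) x))\<^sup>2) = 0"
    using frame_op_quadratic_form[of x n phi] by (simp add: cinner_def)
  then have "phi ` {..<n} \<subseteq> {y. cinner y x = 0}"
    by (auto simp: sum_nonneg_eq_0_iff)
  moreover have "vec.subspace {y. cinner y x = 0}"
    unfolding vec.subspace_def by (simp add: cinner_add_left cinner_scale_left)
  ultimately have "vec.span (phi ` {..<n}) \<subseteq> {y. cinner y x = 0}"
    by (rule vec.span_minimal)
  then have "cinner x x = 0" using assms unfolding is_frame_def by auto
  then show "x = 0" by (simp add: cinner_self_eq_0)
qed

lemma sum_left_translate:
  fixes U :: "nat \<Rightarrow> 'a::field^'n^'n"
  assumes inj: "inj_on U {..<n}" and V: "invertible V"
    and closed: "\<forall>i<n. V ** U i \<in> U ` {..<n}"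
  shows "(\<Sum>i<n. f (V ** U i)) = (\<Sum>i<n. f (U i))"
proof -
  let ?G = "U ` {..<n}"
  have inj_V: "inj_on ((**) V) ?G"
  proof (rule inj_onI)
    fix A B assume "V ** A = V ** B"
    then show "A = B"
      using V unfolding invertible_left_inverse by (metis matrix_mul_assoc matrix_mul_lid)
  qed
  moreover have "(**) V ` ?G = ?G"
    by (rule endo_inj_surj) (use closed inj_V in auto)
  ultimately have "(\<Sum>A\<in>?G. f (V ** A)) = (\<Sum>A\<in>?G. f A)"
    by (metis sum.reindex_bij_betw inj_on_imp_bij_betw)
  then show ?thesis
    by (simp add: sum.reindex[OF inj])
qed

lemma frame_op_unitary_orbit_commute:
  assumes G: "abelian_unitary_group n U" and phi: "\<forall>i<n. phi i = U i *v \<phi>" and j: "j < n"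
  shows "U j ** frame_op n phi = frame_op n phi ** U j"
proof -
  have UU: "cadj (U j) ** U j = mat 1" "U j ** cadj (U j) = mat 1"
    using G j unfolding abelian_unitary_group_def unitary_mat_def by auto
  have frame_op_orbit: "frame_op n phi = (\<Sum>i<n. outer (U i *v \<phi>) (U i *v \<phi>))"
    unfolding frame_op_def using phi by simp
  have "U j ** frame_op n phi ** cadj (U j)
      = (\<Sum>i<n. outer ((U j ** U i) *v \<phi>) ((U j ** U i) *v \<phi>))"
    unfolding frame_op_orbit matrix_sum_ldistrib matrix_sum_rdistrib matrix_outer_cadj
    by (simp add: matrix_vector_mul_assoc)
  also have "\<dots> = frame_op n phi"
    unfolding frame_op_orbit
    by (rule sum_left_translate[of U n "U j" "\<lambda>A. outer (A *v \<phi>) (A *v \<phi>)"])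
      (use G j UU in \<open>auto simp: abelian_unitary_group_def invertible_def\<close>)
  finally have "U j ** frame_op n phi ** cadj (U j) ** U j = frame_op n phi ** U j"
    by simp
  then show ?thesis by (simp add: UU(1) flip: matrix_mul_assoc)
qed

lemma GU_frame_diagonal_constant:
  assumes GU: "GU_frame n U \<phi> phi" and R: "pos_def_mat R"
    and R_sq: "R ** R = matrix_inv (frame_op n phi)" and i: "i < n"
  shows "cinner (phi i) (R *v phi i) = cinner \<phi> (R *v \<phi>)"
proof -
  have G: "abelian_unitary_group n U" and phi: "\<forall>i<n. phi i = U i *v \<phi>"
    and frame: "is_frame n phi"
    using GU unfolding GU_frame_def by auto
  have unitary: "unitary_mat (U i)" using G i unfolding abelian_unitary_group_def by blast
  have "U i ** (R ** R) = (R ** R) ** U i"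
    unfolding R_sq
    by (rule matrix_inv_commute[OF is_frame_invertible_frame_op[OF frame]
          frame_op_unitary_orbit_commute[OF G phi i]])
  then have "cadj (U i) ** R ** U i = R"
    by (rule pos_def_mat_unitary_invariant[OF R unitary])
  then show ?thesis
    using phi i by (simp add: cinner_matrix_vector_left matrix_vector_mul_assoc matrix_mul_assoc)
qed

theorem mainTheorem6:
  fixes n :: nat and U :: "nat \<Rightarrow> complex^'m^'m" and \<phi> :: "complex^'m"
    and phi :: "nat \<Rightarrow> complex^'m" and R :: "complex^'m^'m"
    and mu' :: "nat \<Rightarrow> complex^'m"
  assumes GU: "GU_frame n U \<phi> phi"
    and R_pd: "pos_def_mat R"
    and R_sq: "R ** R = matrix_inv (frame_op n phi)"
    and tight: "(\<Sum>i<n. outer (mu' i) (mu' i)) = mat 1"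
  shows "(\<Sum>i<n. (cmod (cinner (phi i) (mu' i)))\<^sup>2)
           \<le> (\<Sum>i<n. (cmod (cinner (phi i) (R *v phi i)))\<^sup>2)"
proof -
  define S where "S = frame_op n phi"
  define r where "r = Re (cinner \<phi> (R *v \<phi>))"
  have diag: "cinner (phi i) (R *v phi i) = of_real r" if "i < n" for i
    using GU_frame_diagonal_constant[OF GU R_pd R_sq that] R_pd cinner_hermitian_real
    unfolding r_def pos_def_mat_def by metis
  have "invertible S" using GU is_frame_invertible_frame_op unfolding GU_frame_def S_def by blast
  then have RT: "R ** (R ** S) = mat 1"
    using invertible_matrix_inv R_sq unfolding S_def by (metis matrix_mul_assoc)
  have "(\<Sum>i<n. (cmod (cinner (phi i) (mu' i)))\<^sup>2) \<le> (\<Sum>i<n. r * Re (cinner (mu' i) ((R ** S) *v mu' i)))"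
    by (intro sum_mono) (metis diag Re_complex_of_real pos_def_mat_cauchy_schwarz[OF R_pd RT] lessThan_iff)
  also have "\<dots> = r * Re (trace (R ** S))"
    using trace_mult_outer_sum[of "R ** S" mu' "{..<n}"] by (simp add: tight sum_distrib_left Re_sum)
  also have "trace (R ** S) = (\<Sum>i<n. of_real r)"
    unfolding S_def frame_op_def trace_mult_outer_sum by (simp add: diag)
  also have "r * Re (\<Sum>i<n. of_real r) = (\<Sum>i<n. (cmod (cinner (phi i) (R *v phi i)))\<^sup>2)"
    by (simp add: diag power2_eq_square Re_sum sum_distrib_left)
  finally show ?thesis .
qed

end
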